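(* Let $K_n$ be the complete graph on $n$ vertices and let $k$ be a positive integer with $k\leq n-1$. Then $\gamma_{gr}^{k}(K_n)=k$, $\gamma_{gr}^{L,k}(K_n)=k+1$, $\gamma_{gr}^{Z,k}(K_n)=k$, and $\gamma_{gr}^{t,k}(K_n)=k+1$.
   Context: For a vertex $v$, $N(v)$ is its open neighborhood and $N[v]=N(v)\cup\{v\}$. A sequence $S=(v_1,\ldots,v_m)$ of distinct vertices is a $k$-sequence (resp. $k$-$L$-sequence, $k$-$Z$-sequence, $k$-$t$-sequence) if for each $i\in[m]$ there is a vertex $u_i$ with $u_i\in N[v_i]$ (resp. $N[v_i]$, $N(v_i)$, $N(v_i)$) such that the number of indices $j<i$ with $u_i\in N[v_j]$ (resp. $N(v_j)$, $N[v_j]$, $N(v_j)$) is less than $k$. The numbers $\gamma_{gr}^{k}(G)$, $\gamma_{gr}^{L,k}(G)$, $\gamma_{gr}^{Z,k}(G)$, $\gamma_{gr}^{t,k}(G)$ are the maximum lengths of such sequences, respectively. *)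

theory Defs
  imports Main
begin

definition open_nbhd :: "'a set \<Rightarrow> ('a \<Rightarrow> 'a \<Rightarrow> bool) \<Rightarrow> 'a \<Rightarrow> 'a set" where
  "open_nbhd V E v = {u \<in> V. E v u}"

definition closed_nbhd :: "'a set \<Rightarrow> ('a \<Rightarrow> 'a \<Rightarrow> bool) \<Rightarrow> 'a \<Rightarrow> 'a set" where
  "closed_nbhd V E v = insert v (open_nbhd V E v)"

definition gen_seq ::
  "('a \<Rightarrow> 'a set) \<Rightarrow> ('a \<Rightarrow> 'a set) \<Rightarrow> nat \<Rightarrow> 'a set \<Rightarrow> 'a list \<Rightarrow> bool" where
  "gen_seq N1 N2 k V S \<longleftrightarrow> distinct S \<and> set S \<subseteq> V \<and>
     (\<forall>i < length S. \<exists>u. u \<in> N1 (S ! i) \<and> card {j. j < i \<and> u \<in> N2 (S ! j)} < k)"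

definition k_seq where
  "k_seq V E k S = gen_seq (closed_nbhd V E) (closed_nbhd V E) k V S"
definition kL_seq where
  "kL_seq V E k S = gen_seq (closed_nbhd V E) (open_nbhd V E) k V S"
definition kZ_seq where
  "kZ_seq V E k S = gen_seq (open_nbhd V E) (closed_nbhd V E) k V S"
definition kt_seq where
  "kt_seq V E k S = gen_seq (open_nbhd V E) (open_nbhd V E) k V S"

definition gamma_gr where
  "gamma_gr V E k = Max {length S | S. k_seq V E k S}"
definition gamma_gr_L where
  "gamma_gr_L V E k = Max {length S | S. kL_seq V E k S}"
definition gamma_gr_Z where
  "gamma_gr_Z V E k = Max {length S | S. kZ_seq V E k S}"
definition gamma_gr_t where
  "gamma_gr_t V E k = Max {length S | S. kt_seq V E k S}"

definition Kn_V :: "nat \<Rightarrow> nat set" where "Kn_V n = {0..<n}"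
definition Kn_E :: "nat \<Rightarrow> nat \<Rightarrow> bool" where "Kn_E x y \<longleftrightarrow> x \<noteq> y"

end

theory Submission
  imports Defs
begin

text \<open>In \<open>K\<^sub>n\<close> a closed neighbourhood is the whole vertex set and an open one misses
only its centre. Hence at position \<open>k\<close> (closed counting) resp. \<open>k + 1\<close> (open counting) every
candidate vertex already lies in the counted neighbourhoods of at least \<open>k\<close> earlier terms,
which bounds the length. Conversely any \<open>k\<close> distinct vertices form a sequence, and under open
counting so does \<open>0, 1, \<dots>, k\<close>: vertex \<open>0\<close> is adjacent to every later term but not counted
by its own open neighbourhood, so it is a valid witness at every later position.\<close>

lemma open_nbhd_subset: "open_nbhd V E v \<subseteq> V"
  by (auto simp: open_nbhd_def)

lemma closed_nbhd_subset: "v \<in> V \<Longrightarrow> closed_nbhd V E v \<subseteq> V"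
  by (auto simp: closed_nbhd_def open_nbhd_def)

lemma Max_length_eqI:
  assumes "P S\<^sub>0" and "length S\<^sub>0 = m" and "\<And>S. P S \<Longrightarrow> length S \<le> m"
  shows "Max {length S | S. P S} = m"
proof (rule Max_eqI)
  show "finite {length S | S. P S}"
    by (rule finite_subset[of _ "{..m}"]) (auto dest: assms(3))
qed (use assms in auto)

lemma gen_seq_nthE:
  assumes "gen_seq N1 N2 k V S" and "i < length S" and "\<And>v. v \<in> V \<Longrightarrow> N1 v \<subseteq> V"
  obtains u where "u \<in> V" and "card {j. j < i \<and> u \<in> N2 (S ! j)} < k"
proof -
  have "S ! i \<in> V"
    using assms(1,2) nth_mem unfolding gen_seq_def by blast
  then show ?thesis
    using assms that unfolding gen_seq_def by blast
qed

lemma gen_seq_length_le: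
  assumes seq: "gen_seq N1 N2 k V S" and N1: "\<And>v. v \<in> V \<Longrightarrow> N1 v \<subseteq> V"
    and N2: "\<And>u v. u \<in> V \<Longrightarrow> v \<in> V \<Longrightarrow> u \<in> N2 v"
  shows "length S \<le> k"
proof (rule ccontr)
  assume "\<not> length S \<le> k"
  then have long: "k < length S"
    by simp
  then obtain u where u: "u \<in> V" and card_lt: "card {j. j < k \<and> u \<in> N2 (S ! j)} < k"
    using gen_seq_nthE[OF seq _ N1] by blast
  have "S ! j \<in> V" if "j < k" for j
    using seq that long nth_mem unfolding gen_seq_def by (meson less_trans subsetD)
  then have "{j. j < k \<and> u \<in> N2 (S ! j)} = {..<k}"
    using N2 u by auto
  with card_lt show False
    by simp
qed

lemma card_indices_nth_neq:
  assumes "distinct S" and "m \<le> length S"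
  shows "m - 1 \<le> card {j. j < m \<and> S ! j \<noteq> u}"
proof (cases "\<exists>j\<^sub>0<m. S ! j\<^sub>0 = u")
  case True
  then obtain j\<^sub>0 where "j\<^sub>0 < m" and "S ! j\<^sub>0 = u"
    by blast
  with assms have "{j. j < m \<and> S ! j \<noteq> u} = {..<m} - {j\<^sub>0}"
    using nth_eq_iff_index_eq by fastforce
  with \<open>j\<^sub>0 < m\<close> show ?thesis
    by simp
next
  case False
  then have "{j. j < m \<and> S ! j \<noteq> u} = {..<m}"
    by auto
  then show ?thesis
    by simp
qed

lemma gen_seq_length_le_Suc:
  assumes seq: "gen_seq N1 N2 k V S" and N1: "\<And>v. v \<in> V \<Longrightarrow> N1 v \<subseteq> V"
    and N2: "\<And>u v. u \<in> V \<Longrightarrow> v \<in> V \<Longrightarrow> u \<noteq> v \<Longrightarrow> u \<in> N2 v"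
  shows "length S \<le> k + 1"
proof (rule ccontr)
  assume "\<not> length S \<le> k + 1"
  then have long: "k + 1 < length S"
    by simp
  then obtain u where u: "u \<in> V" and card_lt: "card {j. j < k + 1 \<and> u \<in> N2 (S ! j)} < k"
    using gen_seq_nthE[OF seq _ N1] by blast
  have "S ! j \<in> V" if "j < k + 1" for j
    using seq that long nth_mem unfolding gen_seq_def by (meson less_trans subsetD)
  then have "{j. j < k + 1 \<and> S ! j \<noteq> u} \<subseteq> {j. j < k + 1 \<and> u \<in> N2 (S ! j)}"
    using N2 u by auto
  then have "card {j. j < k + 1 \<and> S ! j \<noteq> u} \<le> card {j. j < k + 1 \<and> u \<in> N2 (S ! j)}"
    by (rule card_mono[rotated]) simp
  moreover have "k \<le> card {j. j < k + 1 \<and> S ! j \<noteq> u}"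
    using card_indices_nth_neq[of S "k + 1" u] seq long unfolding gen_seq_def by simp
  ultimately show False
    using card_lt by simp
qed

lemma gen_seq_of_length_le:
  assumes "distinct S" and "set S \<subseteq> V" and "length S \<le> k"
    and "\<And>v. v \<in> set S \<Longrightarrow> N1 v \<noteq> {}"
  shows "gen_seq N1 N2 k V S"
  unfolding gen_seq_def
proof (intro conjI allI impI)
  fix i assume i: "i < length S"
  then obtain u where "u \<in> N1 (S ! i)"
    using assms(4) nth_mem by blast
  moreover have "card {j. j < i \<and> u \<in> N2 (S ! j)} \<le> card {..<i}"
    by (rule card_mono) auto
  ultimately show "\<exists>u. u \<in> N1 (S ! i) \<and> card {j. j < i \<and> u \<in> N2 (S ! j)} < k"
    using i assms(3) by auto
qed (use assms in auto)

lemma gen_seq_Cons: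
  assumes "distinct (v # S)" and "set (v # S) \<subseteq> V" and "length S \<le> k" and "0 < k"
    and "N1 v \<noteq> {}" and "\<And>w. w \<in> set S \<Longrightarrow> v \<in> N1 w" and "v \<notin> N2 v"
  shows "gen_seq N1 N2 k V (v # S)"
  unfolding gen_seq_def
proof (intro conjI allI impI)
  fix i assume i: "i < length (v # S)"
  show "\<exists>u. u \<in> N1 ((v # S) ! i) \<and> card {j. j < i \<and> u \<in> N2 ((v # S) ! j)} < k"
  proof (cases i)
    case 0
    then show ?thesis
      using assms(4,5) by auto
  next
    case (Suc i')
    have "{j. j < i \<and> v \<in> N2 ((v # S) ! j)} \<subseteq> {1..<i}"
      using assms(7) by (auto simp: nth_Cons' split: if_splits)
    then have "card {j. j < i \<and> v \<in> N2 ((v # S) ! j)} \<le> i'"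
      using Suc card_mono[of "{1..<i}"] by fastforce
    moreover have "v \<in> N1 ((v # S) ! i)"
      using Suc i assms(6) by simp
    ultimately show ?thesis
      using Suc i assms(3) by auto
  qed
qed (use assms in auto)

lemma mem_Kn_V: "v \<in> Kn_V n \<longleftrightarrow> v < n"
  by (simp add: Kn_V_def)

lemma Kn_closed_nbhd: "v \<in> Kn_V n \<Longrightarrow> closed_nbhd (Kn_V n) Kn_E v = Kn_V n"
  by (auto simp: closed_nbhd_def open_nbhd_def Kn_E_def)

lemma Kn_open_nbhd: "open_nbhd (Kn_V n) Kn_E v = Kn_V n - {v}"
  by (auto simp: open_nbhd_def Kn_E_def)

lemma gamma_gr_Kn:
  assumes "k \<le> n"
  shows "gamma_gr (Kn_V n) Kn_E k = k"
  unfolding gamma_gr_def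
proof (rule Max_length_eqI)
  show "k_seq (Kn_V n) Kn_E k [0..<k]"
    unfolding k_seq_def using assms
    by (intro gen_seq_of_length_le) (auto simp: mem_Kn_V closed_nbhd_def)
  show "length S \<le> k" if "k_seq (Kn_V n) Kn_E k S" for S
    using that unfolding k_seq_def
    by (rule gen_seq_length_le) (simp_all add: closed_nbhd_subset Kn_closed_nbhd)
qed simp

lemma gamma_gr_Z_Kn:
  assumes "k \<le> n" and "2 \<le> n"
  shows "gamma_gr_Z (Kn_V n) Kn_E k = k"
  unfolding gamma_gr_Z_def
proof (rule Max_length_eqI)
  have "open_nbhd (Kn_V n) Kn_E v \<noteq> {}" for v
  proof -
    have "(if v = 0 then 1 else 0) \<in> open_nbhd (Kn_V n) Kn_E v"
      using assms(2) by (simp add: Kn_open_nbhd mem_Kn_V)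
    then show ?thesis
      by blast
  qed
  then show "kZ_seq (Kn_V n) Kn_E k [0..<k]"
    unfolding kZ_seq_def using assms(1)
    by (intro gen_seq_of_length_le) (auto simp: mem_Kn_V)
  show "length S \<le> k" if "kZ_seq (Kn_V n) Kn_E k S" for S
    using that unfolding kZ_seq_def
    by (rule gen_seq_length_le) (simp_all add: open_nbhd_subset Kn_closed_nbhd)
qed simp

lemma gamma_gr_L_Kn:
  assumes "0 < k" and "k < n"
  shows "gamma_gr_L (Kn_V n) Kn_E k = k + 1"
  unfolding gamma_gr_L_def
proof (rule Max_length_eqI)
  show "kL_seq (Kn_V n) Kn_E k (0 # [1..<k + 1])"
    unfolding kL_seq_def using assms
    by (intro gen_seq_Cons) (auto simp: mem_Kn_V Kn_closed_nbhd Kn_open_nbhd closed_nbhd_def)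
  show "length S \<le> k + 1" if "kL_seq (Kn_V n) Kn_E k S" for S
    using that unfolding kL_seq_def
    by (rule gen_seq_length_le_Suc) (simp_all add: closed_nbhd_subset Kn_open_nbhd)
qed simp

lemma gamma_gr_t_Kn:
  assumes "0 < k" and "k < n"
  shows "gamma_gr_t (Kn_V n) Kn_E k = k + 1"
  unfolding gamma_gr_t_def
proof (rule Max_length_eqI)
  show "kt_seq (Kn_V n) Kn_E k (0 # [1..<k + 1])"
    unfolding kt_seq_def using assms
    by (intro gen_seq_Cons) (auto simp: mem_Kn_V Kn_open_nbhd)
  show "length S \<le> k + 1" if "kt_seq (Kn_V n) Kn_E k S" for S
    using that unfolding kt_seq_def
    by (rule gen_seq_length_le_Suc) (simp_all add: open_nbhd_subset Kn_open_nbhd)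
qed simp

theorem mainTheorem6:
  fixes n k :: nat
  assumes "1 \<le> k" and "k \<le> n - 1"
  shows "gamma_gr (Kn_V n) Kn_E k = k \<and> gamma_gr_L (Kn_V n) Kn_E k = k + 1 \<and>
         gamma_gr_Z (Kn_V n) Kn_E k = k \<and> gamma_gr_t (Kn_V n) Kn_E k = k + 1"
proof -
  have "0 < k" and "k < n"
    using assms by auto
  then show ?thesis
    by (simp add: gamma_gr_Kn gamma_gr_L_Kn gamma_gr_Z_Kn gamma_gr_t_Kn)
qed

end
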